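(* Let $f:\mathbb{R}^d\to\mathbb{R}$ be convex and differentiable, $h:\mathbb{R}^d\to\mathbb{R}\cup\{+\infty\}$ proper, closed and convex, $F=f+h$. Let $x\in\mathbb{R}^d$ and $\lambda>0$ be such that $\mathrm{(LS)}(x,\lambda)$ holds, and let $x^+=x-\lambda G^{f}_{\lambda h}(x)$. Then $$F(x^+)\le F(x)-\tfrac{\lambda}{2}\|G^{f}_{\lambda h}(x)\|^2 .$$
   Context: $\mathbb{R}^d$ carries the standard inner product $\langle\cdot,\cdot\rangle$ and Euclidean norm $\|\cdot\|$. For $\lambda>0$ the proximal operator is $\mathrm{prox}_{\lambda h}(w)=\arg\min_{u\in\mathbb{R}^d}\big\{\lambda h(u)+\tfrac12\|u-w\|^2\big\}$. The gradient mapping is $G^{f}_{\lambda h}(x)=\frac{1}{\lambda}\Big(x-\mathrm{prox}_{\lambda h}\big(x-\lambda\nabla f(x)\big)\Big)$. For $x\in\mathbb{R}^d$ and $\lambda>0$, the linesearch condition $\mathrm{(LS)}(x,\lambda)$ is: with $G=G^{f}_{\lambda h}(x)$, $f(x-2\lambda G)\le f(x-\lambda G)-\lambda\langle G,\nabla f(x)\rangle+\tfrac{\lambda}{2}\|G\|^2$. *)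

theory Defs
  imports "HOL-Analysis.Analysis" "HOL-Library.Extended_Real"
begin

definition ext_epigraph :: "('a \<Rightarrow> ereal) \<Rightarrow> ('a \<times> real) set" where
  "ext_epigraph h = {(x, t). h x \<le> ereal t}"

definition proper_fun :: "('a \<Rightarrow> ereal) \<Rightarrow> bool" where
  "proper_fun h \<longleftrightarrow> (\<exists>x. h x \<noteq> \<infinity>) \<and> (\<forall>x. h x \<noteq> -\<infinity>)"

definition closed_fun :: "('a::topological_space \<Rightarrow> ereal) \<Rightarrow> bool" where
  "closed_fun h \<longleftrightarrow> closed (ext_epigraph h)"

definition convex_fun :: "('a::real_vector \<Rightarrow> ereal) \<Rightarrow> bool" where
  "convex_fun h \<longleftrightarrow> convex (ext_epigraph h)"

definition prox :: "real \<Rightarrow> ('a::real_normed_vector \<Rightarrow> ereal) \<Rightarrow> 'a \<Rightarrow> 'a" where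
  "prox lam h w = arg_min (\<lambda>u. ereal lam * h u + ereal (1/2 * (norm (u - w))\<^sup>2)) (\<lambda>_. True)"

definition grad_map :: "('a::real_normed_vector \<Rightarrow> 'a) \<Rightarrow> real \<Rightarrow> ('a \<Rightarrow> ereal) \<Rightarrow> 'a \<Rightarrow> 'a" where
  "grad_map gradf lam h x = (1 / lam) *\<^sub>R (x - prox lam h (x - lam *\<^sub>R gradf x))"

definition LS :: "('a::real_inner \<Rightarrow> real) \<Rightarrow> ('a \<Rightarrow> 'a) \<Rightarrow> ('a \<Rightarrow> ereal) \<Rightarrow> 'a \<Rightarrow> real \<Rightarrow> bool" where
  "LS f gradf h x lam \<longleftrightarrow>
     (let G = grad_map gradf lam h x in
       f (x - (2 * lam) *\<^sub>R G) \<le> f (x - lam *\<^sub>R G) - lam * (G \<bullet> gradf x) + lam / 2 * (norm G)\<^sup>2)"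

end

theory Submission
  imports Defs
begin

text \<open>With \<open>p = x - \<lambda>G\<close>, the optimality of the prox point tested against \<open>x\<close> gives
  \<open>h(p) \<le> h(x) + \<lambda>\<langle>\<nabla>f(x), G\<rangle> - \<lambda>\<parallel>G\<parallel>\<^sup>2\<close>. Since \<open>p\<close> is the midpoint of \<open>x\<close> and \<open>x - 2\<lambda>G\<close>,
  convexity of \<open>f\<close> combined with (LS) gives \<open>f(p) \<le> f(x) - \<lambda>\<langle>\<nabla>f(x), G\<rangle> + \<lambda>/2 \<parallel>G\<parallel>\<^sup>2\<close>.
  Adding the two inequalities proves the claim.
  The only analytic work is the existence of the prox point, which follows from compactness of
  the sublevel sets of the (coercive) prox objective, restricted to the epigraph of \<open>h\<close>.\<close>

definition prox_obj :: "real \<Rightarrow> ('a::real_normed_vector \<Rightarrow> ereal) \<Rightarrow> 'a \<Rightarrow> 'a \<Rightarrow> ereal" where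
  "prox_obj lam h w u = ereal lam * h u + ereal (1/2 * (norm (u - w))\<^sup>2)"

lemma prox_eq_arg_min_prox_obj: "prox lam h w = arg_min (prox_obj lam h w) (\<lambda>_. True)"
  by (simp add: prox_def prox_obj_def[abs_def])

lemma proper_fun_not_MInf: "proper_fun h \<Longrightarrow> h u \<noteq> -\<infinity>"
  by (simp add: proper_fun_def)

lemma proper_fun_obtain_finite:
  assumes "proper_fun h"
  obtains x r where "h x = ereal r"
  using assms unfolding proper_fun_def by (metis ereal_cases)

lemma closed_convex_proper_affine_minorant:
  fixes h :: "'a::euclidean_space \<Rightarrow> ereal"
  assumes hp: "proper_fun h" and hc: "closed_fun h" and hv: "convex_fun h"
  obtains a b where "\<And>u. ereal (a \<bullet> u + b) \<le> h u"
proof -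
  obtain x0 r0 where r0: "h x0 = ereal r0" using hp by (rule proper_fun_obtain_finite)
  have "(x0, r0 - 1) \<notin> ext_epigraph h" using r0 by (simp add: ext_epigraph_def)
  then obtain aa bb where sep: "aa \<bullet> (x0, r0 - 1) < bb" "\<forall>z\<in>ext_epigraph h. bb < aa \<bullet> z"
    using separating_hyperplane_closed_point hv hc unfolding convex_fun_def closed_fun_def
    by blast
  obtain a0 c where aa: "aa = (a0, c)" by (cases aa)
  have "(x0, r0) \<in> ext_epigraph h" using r0 by (simp add: ext_epigraph_def)
  then have "bb < a0 \<bullet> x0 + c * r0" using sep(2) aa by (auto simp: inner_Pair)
  moreover have "a0 \<bullet> x0 + c * (r0 - 1) < bb" using sep(1) aa by (auto simp: inner_Pair)
  ultimately have c_pos: "c > 0" by (simp add: algebra_simps)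
  have "ereal ((-(1/c) *\<^sub>R a0) \<bullet> u + bb / c) \<le> h u" for u
  proof (cases "h u")
    case (real s)
    then have "(u, s) \<in> ext_epigraph h" by (simp add: ext_epigraph_def)
    then have "bb < a0 \<bullet> u + c * s" using sep(2) aa by (auto simp: inner_Pair)
    then show ?thesis using real c_pos by (simp add: field_simps)
  qed (use proper_fun_not_MInf[OF hp] in auto)
  then show ?thesis by (rule that)
qed

lemma le_of_sq_le_affine:
  fixes r :: real
  assumes "r\<^sup>2 \<le> B + A * r" and "A \<ge> 0"
  shows "r \<le> 1 + \<bar>B\<bar> + A"
proof (cases "r \<le> 1")
  case False
  have "\<bar>B\<bar> \<le> \<bar>B\<bar> * r" using False by (simp add: mult_le_cancel_left1)
  then have "r * r \<le> (\<bar>B\<bar> + A) * r" using assms(1) by (simp add: power2_eq_square algebra_simps)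
  then show ?thesis using False by simp
qed (use assms in auto)

lemma prox_obj_sublevel_bounded:
  fixes h :: "'a::euclidean_space \<Rightarrow> ereal"
  assumes minor: "\<And>u. ereal (a \<bullet> u + b) \<le> h u" and lam: "lam > 0"
  shows "bounded {(u, t). h u \<le> ereal t \<and> lam * t + 1/2 * (norm (u - w))\<^sup>2 \<le> M}"
proof -
  define R where "R = 1 + \<bar>2 * (M - lam * b + lam * norm a * norm w)\<bar> + 2 * lam * norm a"
  have bounds: "norm (u - w) \<le> R \<and> b - norm a * (norm w + R) \<le> t \<and> t \<le> M / lam"
    if ht: "h u \<le> ereal t" and sub: "lam * t + 1/2 * (norm (u - w))\<^sup>2 \<le> M" for u t
  proof -
    have aut: "a \<bullet> u + b \<le> t" using minor[of u] ht by (metis ereal_less_eq(3) order_trans)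
    have "a \<bullet> u = a \<bullet> (u - w) + a \<bullet> w" by (simp add: inner_diff_right)
    moreover have "- (norm a * norm (u - w)) \<le> a \<bullet> (u - w)" "- (norm a * norm w) \<le> a \<bullet> w"
      using Cauchy_Schwarz_ineq2[of a "u - w"] Cauchy_Schwarz_ineq2[of a w] by linarith+
    ultimately have "lam * (- (norm a * norm (u - w)) - norm a * norm w + b) \<le> lam * t"
      using aut lam by (intro mult_left_mono) auto
    then have "(norm (u - w))\<^sup>2 \<le> 2 * (M - lam * b + lam * norm a * norm w)
                                  + 2 * lam * norm a * norm (u - w)"
      using sub by (simp add: algebra_simps)
    then have uw: "norm (u - w) \<le> R"
      unfolding R_def using lam by (intro le_of_sq_le_affine) auto
    have "- (norm a * norm u) \<le> a \<bullet> u" using Cauchy_Schwarz_ineq2[of a u] by linarith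
    moreover have "norm a * norm u \<le> norm a * (norm w + R)"
      using uw norm_triangle_sub[of u w] by (intro mult_left_mono) auto
    moreover have "lam * t \<le> M" using sub zero_le_power2[of "norm (u - w)"] by linarith
    ultimately show ?thesis using aut uw lam by (simp add: field_simps)
  qed
  have "{(u, t). h u \<le> ereal t \<and> lam * t + 1/2 * (norm (u - w))\<^sup>2 \<le> M}
        \<subseteq> cball w R \<times> {b - norm a * (norm w + R) .. M / lam}"
    using bounds by (force simp: dist_norm norm_minus_commute)
  then show ?thesis by (rule bounded_subset[OF bounded_Times[OF bounded_cball bounded_closed_interval]])
qed

lemma prox_obj_has_minimizer:
  fixes h :: "'a::euclidean_space \<Rightarrow> ereal"
  assumes hp: "proper_fun h" and hc: "closed_fun h" and hv: "convex_fun h" and lam: "lam > 0"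
  obtains p where "\<And>u. prox_obj lam h w p \<le> prox_obj lam h w u"
proof -
  obtain a b where minor: "\<And>u. ereal (a \<bullet> u + b) \<le> h u"
    using closed_convex_proper_affine_minorant[OF hp hc hv] by blast
  obtain x0 r0 where r0: "h x0 = ereal r0" using hp by (rule proper_fun_obtain_finite)
  define g where "g = (\<lambda>z::'a \<times> real. lam * snd z + 1/2 * (norm (fst z - w))\<^sup>2)"
  define M where "M = g (x0, r0)"
  define K where "K = ext_epigraph h \<inter> {z. g z \<le> M}"
  have cont_g: "continuous_on UNIV g" unfolding g_def by (intro continuous_intros)
  have "K = {(u, t). h u \<le> ereal t \<and> lam * t + 1/2 * (norm (u - w))\<^sup>2 \<le> M}"
    by (auto simp: K_def ext_epigraph_def g_def)
  then have "bounded K" using prox_obj_sublevel_bounded[OF minor lam] by simp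
  moreover have "closed K" unfolding K_def
    using hc cont_g unfolding closed_fun_def
    by (intro closed_Int) (auto intro: closed_Collect_le continuous_intros)
  ultimately have "compact K" by (simp add: compact_eq_bounded_closed)
  have "(x0, r0) \<in> K" using r0 by (simp add: K_def ext_epigraph_def M_def)
  then obtain z where zK: "z \<in> K" and z_min: "\<And>y. y \<in> K \<Longrightarrow> g z \<le> g y"
    using continuous_attains_inf[OF \<open>compact K\<close> _ continuous_on_subset[OF cont_g subset_UNIV]]
    by blast
  obtain p tp where z: "z = (p, tp)" by (cases z)
  have "h p \<le> ereal tp" and gzM: "g z \<le> M" using zK z by (auto simp: K_def ext_epigraph_def)
  moreover obtain sp where sp: "h p = ereal sp"
    using calculation(1) proper_fun_not_MInf[OF hp, of p] by (cases "h p") auto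
  ultimately have gp: "lam * sp + 1/2 * (norm (p - w))\<^sup>2 \<le> g z" using lam z by (simp add: g_def)
  have "prox_obj lam h w p \<le> prox_obj lam h w u" for u
  proof (cases "h u")
    case (real s)
    have "lam * sp + 1/2 * (norm (p - w))\<^sup>2 \<le> g (u, s)"
    proof (cases "g (u, s) \<le> M")
      case True
      then have "(u, s) \<in> K" using real by (simp add: K_def ext_epigraph_def)
      then show ?thesis using z_min gp by fastforce
    qed (use gp gzM in linarith)
    then show ?thesis using sp real by (simp add: prox_obj_def g_def)
  qed (use proper_fun_not_MInf[OF hp] lam sp in \<open>auto simp: prox_obj_def\<close>)
  then show ?thesis by (rule that)
qed

lemma prox_minimizes_prox_obj:
  fixes h :: "'a::euclidean_space \<Rightarrow> ereal"
  assumes "proper_fun h" and "closed_fun h" and "convex_fun h" and "lam > 0"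
  shows "prox_obj lam h w (prox lam h w) \<le> prox_obj lam h w u"
proof -
  obtain p where p: "\<And>u. prox_obj lam h w p \<le> prox_obj lam h w u"
    using prox_obj_has_minimizer[OF assms] by blast
  show ?thesis unfolding prox_eq_arg_min_prox_obj
    by (rule arg_minI[of "\<lambda>_. True" p]) (use p in \<open>auto simp: not_less\<close>)
qed

lemma le_of_le_add_scaled_small:
  fixes a b c :: real
  assumes "\<And>t. 0 < t \<Longrightarrow> t \<le> 1 \<Longrightarrow> a \<le> b + t * c"
  shows "a \<le> b"
proof -
  have "((\<lambda>t. b + t * c) \<longlongrightarrow> b + 0 * c) (at_right 0)"
    by (intro tendsto_intros tendsto_ident_at)
  moreover have "eventually (\<lambda>t. t \<in> {0<..<1}) (at_right (0::real))"
    by (rule eventually_at_right_real) simp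
  then have "eventually (\<lambda>t. a \<le> b + t * c) (at_right 0)"
    by eventually_elim (use assms in auto)
  ultimately show ?thesis by (intro tendsto_lowerbound) auto
qed

text \<open>Compare the prox point \<open>p\<close> with \<open>p + t(u - p)\<close> and let \<open>t \<rightarrow> 0\<close>.\<close>

lemma prox_variational_ineq:
  fixes h :: "'a::euclidean_space \<Rightarrow> ereal"
  assumes hp: "proper_fun h" and hc: "closed_fun h" and hv: "convex_fun h" and lam: "lam > 0"
    and hu: "h u = ereal r"
  obtains s where "h (prox lam h w) = ereal s"
    and "lam * s \<le> lam * r + (prox lam h w - w) \<bullet> (u - prox lam h w)"
proof -
  define p where "p = prox lam h w"
  have p_min: "prox_obj lam h w p \<le> prox_obj lam h w v" for v
    unfolding p_def using prox_minimizes_prox_obj[OF hp hc hv lam] .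
  have "h p \<noteq> \<infinity>"
    using p_min[of u] hu lam by (auto simp: prox_obj_def)
  then obtain s where s: "h p = ereal s"
    using proper_fun_not_MInf[OF hp, of p] by (cases "h p") auto
  define d where "d = u - p"
  have "lam * s \<le> lam * r + (p - w) \<bullet> d + t * ((norm d)\<^sup>2 / 2)" if t: "0 < t" "t \<le> 1" for t
  proof -
    define q where "q = (1 - t) *\<^sub>R p + t *\<^sub>R u"
    have "(p, s) \<in> ext_epigraph h" "(u, r) \<in> ext_epigraph h"
      using s hu by (auto simp: ext_epigraph_def)
    then have "(1 - t) *\<^sub>R (p, s) + t *\<^sub>R (u, r) \<in> ext_epigraph h"
      using hv t unfolding convex_fun_def by (intro convexD) auto
    then have hq_le: "h q \<le> ereal ((1 - t) * s + t * r)"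
      by (simp add: ext_epigraph_def q_def)
    then obtain sq where sq: "h q = ereal sq"
      using proper_fun_not_MInf[OF hp, of q] by (cases "h q") auto
    have "lam * sq \<le> lam * ((1 - t) * s + t * r)"
      using hq_le sq lam by (intro mult_left_mono) auto
    moreover have "lam * s + 1/2 * (norm (p - w))\<^sup>2 \<le> lam * sq + 1/2 * (norm (q - w))\<^sup>2"
      using p_min[of q] s sq by (simp add: prox_obj_def)
    moreover have "q - w = (p - w) + t *\<^sub>R d" by (simp add: q_def d_def algebra_simps)
    then have "(norm (q - w))\<^sup>2 = (norm (p - w))\<^sup>2 + 2 * t * ((p - w) \<bullet> d) + t\<^sup>2 * (norm d)\<^sup>2"
      unfolding power2_norm_eq_inner by (simp add: algebra_simps inner_commute power2_eq_square)
    ultimately have "t * (lam * s) \<le> t * (lam * r + (p - w) \<bullet> d + t * ((norm d)\<^sup>2 / 2))"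
      by (simp add: algebra_simps power2_eq_square)
    then show ?thesis using t by simp
  qed
  then have "lam * s \<le> lam * r + (p - w) \<bullet> d" by (rule le_of_le_add_scaled_small)
  then show ?thesis using s that unfolding p_def d_def by blast
qed

lemma convex_on_midpoint_descent:
  fixes f :: "'a::real_vector \<Rightarrow> real"
  assumes "convex_on UNIV f" and "f (x - 2 *\<^sub>R v) \<le> f (x - v) + c"
  shows "f (x - v) \<le> f x + c"
proof -
  have "x - v = (1 - 1/2) *\<^sub>R x + (1/2) *\<^sub>R (x - 2 *\<^sub>R v)"
    by (simp add: scaleR_diff_right flip: scaleR_add_left)
  then have "f (x - v) \<le> (1 - 1/2) * f x + 1/2 * f (x - 2 *\<^sub>R v)"
    using convex_onD[OF assms(1), of "1/2" x "x - 2 *\<^sub>R v"] by simp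
  then show ?thesis using assms(2) by simp
qed

lemma grad_map_step_eq_prox:
  "lam \<noteq> 0 \<Longrightarrow> x - lam *\<^sub>R grad_map gradf lam h x = prox lam h (x - lam *\<^sub>R gradf x)"
  by (simp add: grad_map_def)

lemma grad_map_step_h_descent:
  fixes h :: "'a::euclidean_space \<Rightarrow> ereal" and gradf :: "'a \<Rightarrow> 'a"
  assumes "proper_fun h" and "closed_fun h" and "convex_fun h" and lam: "lam > 0"
    and hx: "h x = ereal r"
  defines "G \<equiv> grad_map gradf lam h x"
  obtains s where "h (x - lam *\<^sub>R G) = ereal s"
    and "s \<le> r + lam * (gradf x \<bullet> G - (norm G)\<^sup>2)"
proof -
  define w where "w = x - lam *\<^sub>R gradf x"
  have p: "prox lam h w = x - lam *\<^sub>R G"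
    using lam unfolding G_def w_def by (simp add: grad_map_step_eq_prox)
  obtain s where hp: "h (prox lam h w) = ereal s"
    and prox_ineq: "lam * s \<le> lam * r + (prox lam h w - w) \<bullet> (x - prox lam h w)"
    using prox_variational_ineq[OF assms(1-4) hx, of w] by blast
  have "prox lam h w - w = lam *\<^sub>R (gradf x - G)" and "x - prox lam h w = lam *\<^sub>R G"
    unfolding p by (simp_all add: w_def algebra_simps)
  then have "lam * s \<le> lam * (r + lam * (gradf x \<bullet> G - (norm G)\<^sup>2))"
    using prox_ineq by (simp add: inner_diff_left power2_norm_eq_inner distrib_left)
  then have "s \<le> r + lam * (gradf x \<bullet> G - (norm G)\<^sup>2)"
    using lam by simp
  with hp p show ?thesis using that by simp
qed

lemma LS_imp_f_descent:
  assumes "convex_on UNIV f" and "LS f gradf h x lam"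
  defines "G \<equiv> grad_map gradf lam h x"
  shows "f (x - lam *\<^sub>R G) \<le> f x + (lam / 2 * (norm G)\<^sup>2 - lam * (gradf x \<bullet> G))"
proof -
  have "f (x - 2 *\<^sub>R (lam *\<^sub>R G)) \<le> f (x - lam *\<^sub>R G) + (lam / 2 * (norm G)\<^sup>2 - lam * (G \<bullet> gradf x))"
    using assms(2) unfolding LS_def G_def[symmetric] by (simp add: Let_def)
  then show ?thesis
    using convex_on_midpoint_descent[OF assms(1)] by (simp add: inner_commute)
qed

theorem mainTheorem6:
  fixes f :: "'a::euclidean_space \<Rightarrow> real" and gradf :: "'a \<Rightarrow> 'a"
    and h :: "'a \<Rightarrow> ereal" and x :: 'a and lam :: real
  assumes f_convex: "convex_on UNIV f"
    and f_grad: "\<And>y. (f has_derivative (\<lambda>v. gradf y \<bullet> v)) (at y)"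
    and h_proper: "proper_fun h" and h_closed: "closed_fun h" and h_convex: "convex_fun h"
    and lam_pos: "lam > 0"
    and ls: "LS f gradf h x lam"
  shows "ereal (f (x - lam *\<^sub>R grad_map gradf lam h x)) + h (x - lam *\<^sub>R grad_map gradf lam h x)
         \<le> ereal (f x) + h x - ereal (lam / 2 * (norm (grad_map gradf lam h x))\<^sup>2)"
proof (cases "h x")
  case (real hx)
  define G where "G = grad_map gradf lam h x"
  obtain hp where hp: "h (x - lam *\<^sub>R G) = ereal hp"
    and h_descent: "hp \<le> hx + lam * (gradf x \<bullet> G - (norm G)\<^sup>2)"
    using grad_map_step_h_descent[OF h_proper h_closed h_convex lam_pos real] unfolding G_def by blast
  have "f (x - lam *\<^sub>R G) \<le> f x + (lam / 2 * (norm G)\<^sup>2 - lam * (gradf x \<bullet> G))"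
    using LS_imp_f_descent[OF f_convex ls] unfolding G_def .
  with h_descent have "f (x - lam *\<^sub>R G) + hp \<le> f x + hx - lam / 2 * (norm G)\<^sup>2"
    by (simp add: right_diff_distrib)
  then have "ereal (f (x - lam *\<^sub>R G)) + ereal hp \<le> ereal (f x) + ereal hx - ereal (lam / 2 * (norm G)\<^sup>2)"
    by simp
  then show ?thesis unfolding G_def[symmetric] real hp .
next
  case PInf
  then show ?thesis by simp
next
  case MInf
  then show ?thesis using proper_fun_not_MInf[OF h_proper] by simp
qed

end
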